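(* For every $\varepsilon>0$ there is a connected graph $G$ such that \[ \frac{\operatorname{cdim}(G)}{\operatorname{mdim}(G)}\leq\varepsilon. \]
   Context: All graphs are finite, simple, undirected and nonempty. For distinct vertices $v,w$, $\kappa(v,w)$ is the maximum number of internally vertex-disjoint $v$–$w$ paths (an edge $vw$ counts as one such path); $\kappa(v,v)=\infty$. For an ordered vertex set $W=(w_1,\ldots,w_k)$, $r_G(v,W)=[\kappa(v,w_1),\ldots,\kappa(v,w_k)]$. $W$ is resolving if $r_G(v_1,W)=r_G(v_2,W)$ implies $v_1=v_2$. The connectivity dimension $\operatorname{cdim}(G)$ is the minimum cardinality of a resolving set. The metric dimension $\operatorname{mdim}(G)$ of a connected graph is defined analogously with the distance $d(v,w)$ in place of $\kappa(v,w)$: it is the minimum cardinality of a set $W=(w_1,\dots,w_k)$ such that the vectors $[d(v,w_1),\ldots,d(v,w_k)]$ are pairwise distinct over $v\in V(G)$. *)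

theory Defs
  imports Main "HOL-Library.Extended_Nat"
begin

definition simple_graph :: "'a set \<Rightarrow> ('a \<Rightarrow> 'a \<Rightarrow> bool) \<Rightarrow> bool" where
  "simple_graph V E \<longleftrightarrow> finite V \<and> V \<noteq> {} \<and>
     (\<forall>x y. E x y \<longrightarrow> x \<in> V \<and> y \<in> V) \<and>
     (\<forall>x y. E x y \<longrightarrow> E y x) \<and> (\<forall>x. \<not> E x x)"

definition is_path :: "'a set \<Rightarrow> ('a \<Rightarrow> 'a \<Rightarrow> bool) \<Rightarrow> 'a \<Rightarrow> 'a \<Rightarrow> 'a list \<Rightarrow> bool" where
  "is_path V E v w p \<longleftrightarrow> p \<noteq> [] \<and> hd p = v \<and> last p = w \<and> distinct p \<and>
     set p \<subseteq> V \<and> (\<forall>i. Suc i < length p \<longrightarrow> E (p ! i) (p ! Suc i))"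

definition interior :: "'a list \<Rightarrow> 'a set" where
  "interior p = set (butlast (tl p))"

definition connected_graph :: "'a set \<Rightarrow> ('a \<Rightarrow> 'a \<Rightarrow> bool) \<Rightarrow> bool" where
  "connected_graph V E \<longleftrightarrow> simple_graph V E \<and>
     (\<forall>v\<in>V. \<forall>w\<in>V. \<exists>p. is_path V E v w p)"

definition kappa :: "'a set \<Rightarrow> ('a \<Rightarrow> 'a \<Rightarrow> bool) \<Rightarrow> 'a \<Rightarrow> 'a \<Rightarrow> enat" where
  "kappa V E v w = (if v = w then \<infinity> else
     enat (Max {card P | P. P \<subseteq> {p. is_path V E v w p} \<and>
        (\<forall>p\<in>P. \<forall>q\<in>P. p \<noteq> q \<longrightarrow> interior p \<inter> interior q = {})}))"

definition gdist :: "'a set \<Rightarrow> ('a \<Rightarrow> 'a \<Rightarrow> bool) \<Rightarrow> 'a \<Rightarrow> 'a \<Rightarrow> nat" where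
  "gdist V E v w = (LEAST n. \<exists>p. is_path V E v w p \<and> length p = Suc n)"

definition cdim :: "'a set \<Rightarrow> ('a \<Rightarrow> 'a \<Rightarrow> bool) \<Rightarrow> nat" where
  "cdim V E = (LEAST k. \<exists>W. distinct W \<and> set W \<subseteq> V \<and> length W = k \<and>
     (\<forall>x\<in>V. \<forall>y\<in>V. map (kappa V E x) W = map (kappa V E y) W \<longrightarrow> x = y))"

definition mdim :: "'a set \<Rightarrow> ('a \<Rightarrow> 'a \<Rightarrow> bool) \<Rightarrow> nat" where
  "mdim V E = (LEAST k. \<exists>W. distinct W \<and> set W \<subseteq> V \<and> length W = k \<and>
     (\<forall>x\<in>V. \<forall>y\<in>V. map (gdist V E x) W = map (gdist V E y) W \<longrightarrow> x = y))"

end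

theory Submission
  imports Defs
begin

text \<open>Take the graph on 0, 1, ..., 2m in which 0 is adjacent to everything and
  i, j \<ge> 1 adjacent iff i + j > 2m. Its diameter is at most 2, so each vertex of a
  metric resolving set W separates at most three classes and 2m + 1 \<le> 3^|W|:
  the metric dimension grows logarithmically in m. On the other hand the
  connectivity between a vertex and the universal vertex 0 is the degree, and the
  degrees i + 1 (i \<le> m) and i (i > m) take distinct values apart from the pair m, m + 1;
  hence {0, m} is a connectivity resolving set.\<close>

lemma is_path_singleton: "a \<in> V \<Longrightarrow> is_path V E a a [a]"
  by (simp add: is_path_def)

lemma is_path_edge: "E a b \<Longrightarrow> a \<in> V \<Longrightarrow> b \<in> V \<Longrightarrow> a \<noteq> b \<Longrightarrow> is_path V E a b [a,b]"
  by (auto simp: is_path_def less_Suc_eq)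

lemma is_path_two_edges: "E a b \<Longrightarrow> E b c \<Longrightarrow> a \<in> V \<Longrightarrow> b \<in> V \<Longrightarrow> c \<in> V \<Longrightarrow> a \<noteq> b \<Longrightarrow> a \<noteq> c
   \<Longrightarrow> b \<noteq> c \<Longrightarrow> is_path V E a c [a,b,c]"
  by (auto simp: is_path_def less_Suc_eq)

lemma is_path_second_vertex:
  assumes "is_path V E v w p" "v \<noteq> w"
  obtains u rest where "p = v # u # rest" "E v u"
    "rest = [] \<Longrightarrow> u = w" "rest \<noteq> [] \<Longrightarrow> u \<in> interior p \<and> u \<noteq> w"
proof -
  from assms obtain l where p: "p = v # l" unfolding is_path_def by (cases p) auto
  have "l \<noteq> []" using assms p unfolding is_path_def by auto
  then obtain u rest where l: "l = u # rest" by (cases l) auto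
  have "E v u" using assms p l unfolding is_path_def by force
  moreover have "rest = [] \<Longrightarrow> u = w" using assms p l unfolding is_path_def by auto
  moreover have "u \<in> interior p \<and> u \<noteq> w" if rest: "rest \<noteq> []"
  proof -
    have "u \<in> interior p" using rest unfolding interior_def p l by simp
    moreover have "last rest = w" "u \<notin> set rest"
      using assms p l rest unfolding is_path_def by auto
    ultimately show ?thesis using rest last_in_set by metis
  qed
  ultimately show thesis using that p l by blast
qed

text \<open>Internally disjoint v-w paths have pairwise distinct second vertices, all of
  them neighbours of v.\<close>
lemma card_disjoint_paths_le_degree:
  assumes g: "simple_graph V E" and vw: "v \<noteq> w"
    and P: "P \<subseteq> {p. is_path V E v w p}"
    and disj: "\<forall>p\<in>P. \<forall>q\<in>P. p \<noteq> q \<longrightarrow> interior p \<inter> interior q = {}"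
  shows "card P \<le> card {u. E v u}"
proof -
  have "{u. E v u} \<subseteq> V" "finite V" using g unfolding simple_graph_def by auto
  then have "finite {u. E v u}" by (rule finite_subset)
  moreover have "inj_on (\<lambda>p. p ! 1) P"
  proof (rule inj_onI)
    fix p q assume pP: "p \<in> P" and qP: "q \<in> P" and eq: "p ! 1 = q ! 1"
    have "is_path V E v w p" "is_path V E v w q" using pP qP P by auto
    obtain u rest where p: "p = v # u # rest"
      "rest = [] \<Longrightarrow> u = w" "rest \<noteq> [] \<Longrightarrow> u \<in> interior p \<and> u \<noteq> w"
      using is_path_second_vertex[OF \<open>is_path V E v w p\<close> vw] by metis
    obtain u' rest' where q: "q = v # u' # rest'"
      "rest' = [] \<Longrightarrow> u' = w" "rest' \<noteq> [] \<Longrightarrow> u' \<in> interior q \<and> u' \<noteq> w"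
      using is_path_second_vertex[OF \<open>is_path V E v w q\<close> vw] by metis
    have "u' = u" using eq p(1) q(1) by simp
    show "p = q"
    proof (cases "rest = []")
      case True
      then show ?thesis using p q \<open>u' = u\<close> by auto
    next
      case False
      then have "u \<in> interior p" "u \<noteq> w" using p by auto
      then have "u \<in> interior q" using q \<open>u' = u\<close> by auto
      then show ?thesis using \<open>u \<in> interior p\<close> disj pP qP by auto
    qed
  qed
  moreover have "(\<lambda>p. p ! 1) ` P \<subseteq> {u. E v u}"
  proof clarify
    fix p assume "p \<in> P"
    then have "is_path V E v w p" using P by auto
    then obtain u rest where "p = v # u # rest" "E v u"
      using is_path_second_vertex[OF _ vw] by metis
    then show "E v (p ! 1)" by simp
  qed
  ultimately show ?thesis by (intro card_inj_on_le)
qed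

text \<open>Through a universal vertex w every neighbour u of v yields the path v u w
  (or the edge v w itself), and these paths are internally disjoint.\<close>
lemma disjoint_paths_to_universal_vertex:
  assumes g: "simple_graph V E" and wV: "w \<in> V"
    and univ: "\<And>x. x \<in> V \<Longrightarrow> x \<noteq> w \<Longrightarrow> E x w"
    and vV: "v \<in> V" and vw: "v \<noteq> w"
  obtains P where "P \<subseteq> {p. is_path V E v w p}"
    "\<forall>p\<in>P. \<forall>q\<in>P. p \<noteq> q \<longrightarrow> interior p \<inter> interior q = {}"
    "card P = card {u. E v u}"
proof -
  define f where "f u = (if u = w then [v,w] else [v,u,w])" for u
  have "inj_on f {u. E v u}"
    by (rule inj_onI) (auto simp: f_def split: if_splits)
  then have "card (f ` {u. E v u}) = card {u. E v u}" by (rule card_image)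
  moreover have "f ` {u. E v u} \<subseteq> {p. is_path V E v w p}"
  proof clarify
    fix u assume vu: "E v u"
    then have "u \<in> V" "v \<noteq> u" using g unfolding simple_graph_def by metis+
    then show "is_path V E v w (f u)"
      using is_path_edge[of E v w V] is_path_two_edges[of E v u w V] univ vu vV wV vw
      unfolding f_def by auto
  qed
  moreover have "interior (f u) = (if u = w then {} else {u})" for u
    unfolding f_def interior_def by simp
  then have "\<forall>p\<in>f ` {u. E v u}. \<forall>q\<in>f ` {u. E v u}. p \<noteq> q \<longrightarrow> interior p \<inter> interior q = {}"
    by auto
  ultimately show thesis using that by blast
qed

lemma kappa_to_universal_vertex:
  assumes g: "simple_graph V E" and wV: "w \<in> V"
    and univ: "\<And>x. x \<in> V \<Longrightarrow> x \<noteq> w \<Longrightarrow> E x w"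
    and vV: "v \<in> V" and vw: "v \<noteq> w"
  shows "kappa V E v w = enat (card {u. E v u})"
proof -
  define S where "S = {card P | P. P \<subseteq> {p. is_path V E v w p} \<and>
        (\<forall>p\<in>P. \<forall>q\<in>P. p \<noteq> q \<longrightarrow> interior p \<inter> interior q = {})}"
  have ub: "x \<le> card {u. E v u}" if "x \<in> S" for x
    using that card_disjoint_paths_le_degree[OF g vw] unfolding S_def by auto
  then have "S \<subseteq> {..card {u. E v u}}" by auto
  then have "finite S" by (rule finite_subset) simp
  moreover obtain P where "P \<subseteq> {p. is_path V E v w p}"
    "\<forall>p\<in>P. \<forall>q\<in>P. p \<noteq> q \<longrightarrow> interior p \<inter> interior q = {}" "card P = card {u. E v u}"
    by (rule disjoint_paths_to_universal_vertex[OF assms])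
  then have "card {u. E v u} \<in> S" unfolding S_def by (intro CollectI exI[of _ P]) simp
  ultimately have "Max S = card {u. E v u}" using ub by (intro Max_eqI) auto
  then show ?thesis unfolding kappa_def S_def using vw by simp
qed

lemma kappa_eq_infinity_iff: "kappa V E v w = \<infinity> \<longleftrightarrow> v = w"
  unfolding kappa_def by simp

lemma short_path_via_universal_vertex:
  assumes g: "simple_graph V E" and wV: "w \<in> V"
    and univ: "\<And>x. x \<in> V \<Longrightarrow> x \<noteq> w \<Longrightarrow> E x w"
    and xV: "x \<in> V" and yV: "y \<in> V"
  shows "\<exists>p. is_path V E x y p \<and> length p \<le> 3"
proof -
  have sym: "E a b \<Longrightarrow> E b a" for a b using g unfolding simple_graph_def by blast
  consider "x = y" | "x \<noteq> y" "x = w" | "x \<noteq> y" "y = w" | "x \<noteq> y" "x \<noteq> w" "y \<noteq> w"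
    by blast
  then show ?thesis
  proof cases
    case 1
    then have "is_path V E x y [x]" using is_path_singleton[OF xV] by simp
    then show ?thesis by (intro exI[of _ "[x]"]) simp
  next
    case 2
    then have "is_path V E x y [x, y]" using is_path_edge sym univ xV yV by metis
    then show ?thesis by (intro exI[of _ "[x, y]"]) simp
  next
    case 3
    then have "is_path V E x y [x, y]" using is_path_edge univ xV yV by metis
    then show ?thesis by (intro exI[of _ "[x, y]"]) simp
  next
    case 4
    then have "is_path V E x y [x, w, y]" using is_path_two_edges sym univ xV yV wV by metis
    then show ?thesis by (intro exI[of _ "[x, w, y]"]) simp
  qed
qed

lemma gdist_less_length:
  assumes "is_path V E x y p"
  shows "gdist V E x y < length p"
proof -
  have "length p = Suc (length p - 1)" using assms unfolding is_path_def by simp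
  then have "gdist V E x y \<le> length p - 1"
    unfolding gdist_def using assms by (intro Least_le) blast
  then show ?thesis using \<open>length p = Suc (length p - 1)\<close> by linarith
qed

lemma gdist_self: "x \<in> V \<Longrightarrow> gdist V E x x = 0"
  unfolding gdist_def using is_path_singleton[of x V E] by (intro Least_eq_0) force

lemma gdist_eq_0_imp_eq:
  assumes "is_path V E x y p" "gdist V E x y = 0"
  shows "x = y"
proof -
  have "\<exists>q. is_path V E x y q \<and> length q = Suc (gdist V E x y)"
    unfolding gdist_def
    by (rule LeastI[of _ "length p - 1"]) (use assms in \<open>auto simp: is_path_def\<close>)
  then obtain q where "is_path V E x y q" "length q = 1" using assms(2) by auto
  then show ?thesis unfolding is_path_def by (cases q) auto
qed

text \<open>The whole vertex set resolves a connected graph, so the LEAST in the definition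
  of mdim is attained.\<close>
lemma mdim_resolving:
  assumes "connected_graph V E"
  shows "\<exists>W. distinct W \<and> set W \<subseteq> V \<and> length W = mdim V E \<and>
     (\<forall>x\<in>V. \<forall>y\<in>V. map (gdist V E x) W = map (gdist V E y) W \<longrightarrow> x = y)"
proof -
  have "finite V" using assms unfolding connected_graph_def simple_graph_def by blast
  then obtain xs where xs: "distinct xs" "set xs = V" using finite_distinct_list by blast
  have resolving: "\<forall>x\<in>V. \<forall>y\<in>V. map (gdist V E x) xs = map (gdist V E y) xs \<longrightarrow> x = y"
  proof (intro ballI impI)
    fix x y assume xV: "x \<in> V" and yV: "y \<in> V"
      and "map (gdist V E x) xs = map (gdist V E y) xs"
    then have "gdist V E y x = gdist V E x x" using xs(2) by (simp add: map_eq_conv)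
    then have "gdist V E y x = 0" using gdist_self[OF xV] by simp
    moreover obtain p where "is_path V E y x p"
      using assms xV yV unfolding connected_graph_def by blast
    ultimately show "x = y" using gdist_eq_0_imp_eq[of V E y x p] by simp
  qed
  show ?thesis
    unfolding mdim_def
    by (rule LeastI[of _ "length xs"], intro exI[of _ xs] conjI) (use xs resolving in simp_all)
qed

text \<open>With all distances at most D, each vertex of a metric resolving set takes at most
  D + 1 values, so the distance vectors are words of length mdim over D + 1 letters.\<close>
lemma card_le_power_mdim:
  assumes conn: "connected_graph V E"
    and diam: "\<And>x y. x \<in> V \<Longrightarrow> y \<in> V \<Longrightarrow> gdist V E x y \<le> D"
  shows "card V \<le> Suc D ^ mdim V E"
proof -
  obtain W where W: "set W \<subseteq> V" "length W = mdim V E"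
    "\<forall>x\<in>V. \<forall>y\<in>V. map (gdist V E x) W = map (gdist V E y) W \<longrightarrow> x = y"
    using mdim_resolving[OF conn] by blast
  let ?L = "{xs. set xs \<subseteq> {..D} \<and> length xs = mdim V E}"
  have "inj_on (\<lambda>x. map (gdist V E x) W) V" using W(3) by (intro inj_onI) blast
  moreover have "(\<lambda>x. map (gdist V E x) W) ` V \<subseteq> ?L" using W(1,2) by (auto intro!: diam)
  moreover have "finite ?L" by (rule finite_lists_length_eq) simp
  ultimately have "card V \<le> card ?L" by (rule card_inj_on_le)
  also have "card ?L = Suc D ^ mdim V E" by (simp add: card_lists_length_eq)
  finally show ?thesis .
qed

lemma cdim_le_length:
  assumes "distinct W" "set W \<subseteq> V"
    and "\<forall>x\<in>V. \<forall>y\<in>V. map (kappa V E x) W = map (kappa V E y) W \<longrightarrow> x = y"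
  shows "cdim V E \<le> length W"
  unfolding cdim_def using assms by (intro Least_le) blast

definition threshold_vertices :: "nat \<Rightarrow> nat set" where
  "threshold_vertices m = {0..2*m}"

definition threshold_edge :: "nat \<Rightarrow> nat \<Rightarrow> nat \<Rightarrow> bool" where
  "threshold_edge m x y \<longleftrightarrow> x \<le> 2*m \<and> y \<le> 2*m \<and> x \<noteq> y \<and> (x = 0 \<or> y = 0 \<or> 2*m < x + y)"

abbreviation "TV \<equiv> threshold_vertices"
abbreviation "TE \<equiv> threshold_edge"

lemma threshold_simple: "simple_graph (TV m) (TE m)"
  unfolding simple_graph_def threshold_vertices_def threshold_edge_def by auto

lemma threshold_universal: "x \<in> TV m \<Longrightarrow> x \<noteq> 0 \<Longrightarrow> TE m x 0"
  unfolding threshold_vertices_def threshold_edge_def by auto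

lemma threshold_zero_vertex: "0 \<in> TV m"
  unfolding threshold_vertices_def by simp

lemma threshold_connected: "connected_graph (TV m) (TE m)"
  unfolding connected_graph_def
proof (intro conjI threshold_simple ballI)
  fix x y assume "x \<in> TV m" "y \<in> TV m"
  then show "\<exists>p. is_path (TV m) (TE m) x y p"
    using short_path_via_universal_vertex[OF threshold_simple threshold_zero_vertex
        threshold_universal] by blast
qed

lemma threshold_gdist_le_2:
  assumes "x \<in> TV m" "y \<in> TV m"
  shows "gdist (TV m) (TE m) x y \<le> 2"
proof -
  obtain p where "is_path (TV m) (TE m) x y p" "length p \<le> 3"
    using short_path_via_universal_vertex[OF threshold_simple threshold_zero_vertex
        threshold_universal assms] by blast
  then have "gdist (TV m) (TE m) x y < 3" using gdist_less_length[of "TV m" "TE m" x y p] by linarith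
  then show ?thesis by simp
qed

lemma threshold_degree:
  assumes "1 \<le> i" "i \<le> 2*m"
  shows "card {u. TE m i u} = (if i \<le> m then i + 1 else i)"
proof -
  have "{u. TE m i u} = insert 0 ({2*m+1-i..2*m} - {i})"
    using assms unfolding threshold_edge_def by auto
  moreover have "0 \<notin> {2*m+1-i..2*m} - {i}" using assms by auto
  moreover have "card {2*m+1-i..2*m} = i" using assms by simp
  moreover have "i \<in> {2*m+1-i..2*m} \<longleftrightarrow> \<not> i \<le> m" using assms by auto
  ultimately show ?thesis by (simp add: card_Diff_singleton_if)
qed

lemma threshold_kappa_zero:
  assumes "x \<in> TV m" "x \<noteq> 0"
  shows "kappa (TV m) (TE m) x 0 = enat (if x \<le> m then x + 1 else x)"
  using kappa_to_universal_vertex[OF threshold_simple threshold_zero_vertex threshold_universal assms]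
    threshold_degree[of x m] assms unfolding threshold_vertices_def by simp

text \<open>The only vertices with equal connectivity to 0 are m and m + 1, and m is
  separated from every other vertex by its infinite connectivity to itself.\<close>
lemma threshold_cdim_le_2:
  assumes "1 \<le> m"
  shows "cdim (TV m) (TE m) \<le> 2"
proof (rule order_trans[OF cdim_le_length[of "[0, m]"]])
  show "distinct [0, m]" "set [0, m] \<subseteq> TV m"
    using assms unfolding threshold_vertices_def by auto
  show "\<forall>x\<in>TV m. \<forall>y\<in>TV m. map (kappa (TV m) (TE m) x) [0, m] = map (kappa (TV m) (TE m) y) [0, m]
          \<longrightarrow> x = y"
  proof (intro ballI impI)
    fix x y assume xV: "x \<in> TV m" and yV: "y \<in> TV m"
      and "map (kappa (TV m) (TE m) x) [0, m] = map (kappa (TV m) (TE m) y) [0, m]"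
    then have e0: "kappa (TV m) (TE m) x 0 = kappa (TV m) (TE m) y 0"
      and em: "kappa (TV m) (TE m) x m = kappa (TV m) (TE m) y m" by auto
    show "x = y"
    proof (cases "x \<in> {0, m} \<or> y \<in> {0, m}")
      case True
      then show ?thesis using e0 em kappa_eq_infinity_iff[of "TV m" "TE m"] by (metis insert_iff singletonD)
    next
      case False
      then have "enat (if x \<le> m then x + 1 else x) = enat (if y \<le> m then y + 1 else y)"
        using e0 threshold_kappa_zero xV yV by simp
      then show ?thesis using False by (auto split: if_splits)
    qed
  qed
qed simp

theorem mainTheorem7:
  fixes \<epsilon> :: real
  assumes "\<epsilon> > 0"
  shows "\<exists>(V :: nat set) E. connected_graph V E \<and> mdim V E > 0 \<and>
           real (cdim V E) / real (mdim V E) \<le> \<epsilon>"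
proof -
  define K where "K = nat \<lceil>2 / \<epsilon>\<rceil>"
  define m where "m = (3::nat) ^ K"
  have "(3::nat) ^ K < card (TV m)" unfolding m_def threshold_vertices_def by simp
  also have "\<dots> \<le> 3 ^ mdim (TV m) (TE m)"
    using card_le_power_mdim[OF threshold_connected threshold_gdist_le_2] by simp
  finally have md: "K < mdim (TV m) (TE m)" by (rule power_less_imp_less_exp[rotated]) simp
  have "real (cdim (TV m) (TE m)) / real (mdim (TV m) (TE m)) \<le> 2 / real (Suc K)"
    using threshold_cdim_le_2[of m] md by (intro frac_le) (auto simp: m_def)
  also have "\<dots> \<le> \<epsilon>"
  proof -
    have "2 / \<epsilon> \<le> real K" unfolding K_def by linarith
    then show ?thesis using assms by (simp add: field_simps)
  qed
  finally show ?thesis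
    using threshold_connected md by (intro exI[of _ "TV m"] exI[of _ "TE m"]) auto
qed

end
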